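(* Let $\beta\in\mathbb{R}\setminus\{0\}$ and let $\Gamma$ be a lattice in $\operatorname{PSL}(2,\mathbb{R})$ such that the stabilizer of $\infty$ in $\Gamma$ is $\Gamma_\infty=\{\pm\begin{pmatrix}1&k\\0&1\end{pmatrix}: k\in\mathbb{Z}\}$ and the stabilizer of $0$ in $\Gamma$ is $\Gamma_0=\{\pm\begin{pmatrix}1&0\\k\beta^2&1\end{pmatrix}: k\in\mathbb{Z}\}$ (acting by Möbius transformations). If $\mathrm{Tr}(\Gamma)$ has linear growth, then $A^2\in\operatorname{PSL}(2,\mathbb{Q})$ for every $A\in\Gamma$.
   Context: $\mathrm{Tr}(\Gamma)$ is the set of traces of all matrices in $\operatorname{SL}(2,\mathbb{R})$ projecting to elements of $\Gamma$ (so traces are taken up to sign). A set $A\subset\mathbb{R}$ has linear growth if there are constants $C,D>0$ with $\#\{a\in A: |a|\le n\}\le Cn+D$ for all $n$. $A^2\in\operatorname{PSL}(2,\mathbb{Q})$ means $A^2$ has a matrix representative with rational entries. *)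

theory Defs
  imports "HOL-Analysis.Analysis"
begin

text \<open>Matrices in SL(2,R) are elements of real^2^2 with determinant 1.
A subgroup of PSL(2,R) is represented by its full preimage in SL(2,R):
a subgroup of SL(2,R) containing -I (equivalently closed under negation).\<close>

type_synonym mat2 = "real^2^2"

definition SL2 :: "mat2 set" where
  "SL2 = {A. det A = 1}"

definition psl_subgroup :: "mat2 set \<Rightarrow> bool" where
  "psl_subgroup G \<longleftrightarrow> G \<subseteq> SL2 \<and> mat 1 \<in> G \<and>
     (\<forall>A\<in>G. \<forall>B\<in>G. A ** B \<in> G) \<and> (\<forall>A\<in>G. matrix_inv A \<in> G) \<and> (\<forall>A\<in>G. - A \<in> G)"

definition mobius :: "mat2 \<Rightarrow> complex \<Rightarrow> complex" where
  "mobius A z = (of_real (A$1$1) * z + of_real (A$1$2)) / (of_real (A$2$1) * z + of_real (A$2$2))"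

definition upper_half_plane :: "complex set" where
  "upper_half_plane = {z. Im z > 0}"

definition discrete_subgroup :: "mat2 set \<Rightarrow> bool" where
  "discrete_subgroup G \<longleftrightarrow> psl_subgroup G \<and>
     (\<forall>A\<in>G. \<exists>e>0. \<forall>B\<in>G. dist B A < e \<longrightarrow> B = A)"

definition fundamental_domain :: "mat2 set \<Rightarrow> complex set \<Rightarrow> bool" where
  "fundamental_domain G F \<longleftrightarrow> F \<subseteq> upper_half_plane \<and> F \<in> sets lebesgue \<and>
     (\<forall>z\<in>upper_half_plane. \<exists>A\<in>G. mobius A z \<in> F) \<and>
     (\<forall>w1\<in>F. \<forall>w2\<in>F. \<forall>A\<in>G. mobius A w1 = w2 \<longrightarrow> w1 = w2)"

definition hyp_area :: "complex set \<Rightarrow> ennreal" where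
  "hyp_area F = (\<integral>\<^sup>+ z. ennreal (1 / (Im z)^2) * indicator F z \<partial>lborel)"

text \<open>Lattice in PSL(2,R): discrete subgroup with finite covolume, i.e. admitting a
fundamental domain in H of finite hyperbolic area.\<close>
definition psl_lattice :: "mat2 set \<Rightarrow> bool" where
  "psl_lattice G \<longleftrightarrow> discrete_subgroup G \<and>
     (\<exists>F. fundamental_domain G F \<and> hyp_area F < \<infinity>)"

text \<open>Stabilizers of infinity (c = 0) and of 0 (b = 0) under the Moebius action z |-> (az+b)/(cz+d).\<close>
definition stab_infty :: "mat2 set \<Rightarrow> mat2 set" where
  "stab_infty G = {A\<in>G. A$2$1 = 0}"

definition stab_zero :: "mat2 set \<Rightarrow> mat2 set" where
  "stab_zero G = {A\<in>G. A$1$2 = 0}"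

definition traces :: "mat2 set \<Rightarrow> real set" where
  "traces G = {trace A | A. A \<in> G}"

definition linear_growth :: "real set \<Rightarrow> bool" where
  "linear_growth S \<longleftrightarrow> (\<exists>C>0. \<exists>D>0. \<forall>n::nat.
     finite {a\<in>S. \<bar>a\<bar> \<le> real n} \<and> real (card {a\<in>S. \<bar>a\<bar> \<le> real n}) \<le> C * real n + D)"

definition upper_unipotent :: "real \<Rightarrow> mat2" where
  "upper_unipotent t = vector [vector [1, t], vector [0, 1]]"

definition lower_unipotent :: "real \<Rightarrow> mat2" where
  "lower_unipotent t = vector [vector [1, 0], vector [t, 1]]"

definition rational_matrix :: "mat2 \<Rightarrow> bool" where
  "rational_matrix A \<longleftrightarrow> (\<forall>i j. A$i$j \<in> \<rat>)"

end

theory Submission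
  imports Defs "HOL-Analysis.Harmonic_Numbers"
begin

(* For A = [[a, b], [c, d]] in the group, the traces of A U(k) L(m beta^2) are
   a + d + c k + b m beta^2 + a k m beta^2. For each k this is an arithmetic progression in m
   with step beta^2 a (b/a + k). If b/a were irrational, these progressions would meet pairwise
   in at most one point, and since the densities 1/|beta^2 a (b/a + k)| have divergent harmonic
   sum, they would put more than C n + D traces into [-n, n]. So b/a and c/(beta^2 a), and
   likewise with d in place of a, are rational. For A = U(1) L(beta^2) this makes beta^2
   rational; then A is a scalar e times a rational matrix with e^2 rational since det A = 1,
   and A^2 is rational. The remaining cases are b = 0, where A lies in the stabiliser of 0,
   and a = d = 0, where A^2 = -I. *)

definition arith_prog :: "real \<Rightarrow> real \<Rightarrow> real set" where
  "arith_prog u x = range (\<lambda>k::int. u + of_int k * x)"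

lemma arith_prog_inter_unique:
  assumes ratio: "x / x' \<notin> \<rat>"
    and v: "v \<in> arith_prog u x \<inter> arith_prog u' x'" and w: "w \<in> arith_prog u x \<inter> arith_prog u' x'"
  shows "v = w"
proof -
  obtain k l k' l' :: int where
    "v = u + of_int k * x" "w = u + of_int l * x" "v = u' + of_int k' * x'" "w = u' + of_int l' * x'"
    using v w unfolding arith_prog_def by blast
  then have diff: "of_int (k - l) * x = of_int (k' - l') * x'"
    by (simp add: algebra_simps)
  have "x' \<noteq> 0"
    using ratio by auto
  show "v = w"
  proof (rule ccontr)
    assume "v \<noteq> w"
    with \<open>v = u + of_int k * x\<close> \<open>w = u + of_int l * x\<close> have "k \<noteq> l"
      by auto
    with diff \<open>x' \<noteq> 0\<close> have "x / x' = of_int (k' - l') / of_int (k - l)"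
      by (simp add: field_simps)
    with ratio show False
      by simp
  qed
qed

lemma finite_arith_prog_bounded:
  assumes "x \<noteq> 0"
  shows "finite {v \<in> arith_prog u x. \<bar>v\<bar> \<le> t}"
proof -
  define K where "K = \<lceil>(t + \<bar>u\<bar>) / \<bar>x\<bar>\<rceil>"
  have "{v \<in> arith_prog u x. \<bar>v\<bar> \<le> t} \<subseteq> (\<lambda>k. u + of_int k * x) ` {-K..K}"
  proof
    fix v assume "v \<in> {v \<in> arith_prog u x. \<bar>v\<bar> \<le> t}"
    then obtain k :: int where v: "v = u + of_int k * x" and "\<bar>v\<bar> \<le> t"
      unfolding arith_prog_def by blast
    then have "\<bar>of_int k\<bar> * \<bar>x\<bar> \<le> t + \<bar>u\<bar>"
      by (simp add: abs_mult[symmetric])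
    with assms have "\<bar>k\<bar> \<le> K"
      unfolding K_def by (simp add: pos_le_divide_eq[symmetric] le_ceiling_iff)
    with v show "v \<in> (\<lambda>k. u + of_int k * x) ` {-K..K}"
      by (force simp: abs_le_iff)
  qed
  then show ?thesis
    by (rule finite_subset) simp
qed

lemma card_arith_prog_bounded_ge:
  assumes "x \<noteq> 0"
  shows "2 * ((t - \<bar>u\<bar>) / \<bar>x\<bar>) - 1 \<le> real (card {v \<in> arith_prog u x. \<bar>v\<bar> \<le> t})"
proof (cases "t - \<bar>u\<bar> < 0")
  case True
  with assms have "(t - \<bar>u\<bar>) / \<bar>x\<bar> < 0"
    by (simp add: divide_neg_pos)
  then show ?thesis
    using of_nat_0_le_iff[of "card {v \<in> arith_prog u x. \<bar>v\<bar> \<le> t}"] by linarith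
next
  case False
  define K where "K = \<lfloor>(t - \<bar>u\<bar>) / \<bar>x\<bar>\<rfloor>"
  have "(\<lambda>k. u + of_int k * x) ` {-K..K} \<subseteq> {v \<in> arith_prog u x. \<bar>v\<bar> \<le> t}"
  proof clarify
    fix k assume "k \<in> {-K..K}"
    then have "\<bar>of_int k\<bar> \<le> (t - \<bar>u\<bar>) / \<bar>x\<bar>"
      unfolding K_def atLeastAtMost_iff abs_le_iff by linarith
    with assms have "\<bar>of_int k\<bar> * \<bar>x\<bar> \<le> t - \<bar>u\<bar>"
      by (simp add: pos_le_divide_eq)
    then have "\<bar>u + of_int k * x\<bar> \<le> t"
      using abs_triangle_ineq[of u "of_int k * x"] by (simp add: abs_mult)
    then show "u + of_int k * x \<in> arith_prog u x \<and> \<bar>u + of_int k * x\<bar> \<le> t"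
      unfolding arith_prog_def by auto
  qed
  moreover have "inj_on (\<lambda>k. u + of_int k * x) {-K..K}"
    using assms by (auto simp: inj_on_def)
  ultimately have "card {-K..K} \<le> card {v \<in> arith_prog u x. \<bar>v\<bar> \<le> t}"
    by (metis card_image card_mono finite_arith_prog_bounded[OF assms])
  moreover have "card {-K..K} = nat (2 * K + 1)" and "0 \<le> K"
    using False assms unfolding K_def by auto
  moreover have "(t - \<bar>u\<bar>) / \<bar>x\<bar> < of_int K + 1"
    unfolding K_def by linarith
  ultimately show ?thesis
    by linarith
qed

lemma card_UN_ge_sum_card:
  fixes Q :: "nat \<Rightarrow> 'a set"
  assumes fin: "\<And>i. finite (Q i)"
    and overlap: "\<And>i j. i \<noteq> j \<Longrightarrow> card (Q i \<inter> Q j) \<le> 1"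
  shows "(\<Sum>i<M. card (Q i)) \<le> card (\<Union>i<M. Q i) + M ^ 2"
proof (induction M)
  case 0
  then show ?case by simp
next
  case (Suc M)
  let ?A = "\<Union>i<M. Q i"
  have "card (?A \<inter> Q M) \<le> (\<Sum>i<M. card (Q i \<inter> Q M))"
    using card_UN_le[of "{..<M}" "\<lambda>i. Q i \<inter> Q M"] by (simp add: Int_UN_distrib2)
  also have "\<dots> \<le> M"
    using sum_mono[of "{..<M}" "\<lambda>i. card (Q i \<inter> Q M)" "\<lambda>_. 1"] overlap by simp
  finally have "card (?A \<inter> Q M) \<le> M" .
  moreover have "card ?A + card (Q M) = card (?A \<union> Q M) + card (?A \<inter> Q M)"
    using card_Un_Int[of ?A "Q M"] fin by simp
  moreover have "?A \<union> Q M = (\<Union>i<Suc M. Q i)"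
    by (auto simp: lessThan_Suc)
  ultimately show ?case
    using Suc.IH by (simp add: power2_eq_square)
qed

lemma sum_card_arith_progs_le:
  fixes T :: "real set" and u x :: "nat \<Rightarrow> real"
  assumes ratio: "\<And>m m'. m \<noteq> m' \<Longrightarrow> x m / x m' \<notin> \<rat>"
    and nonzero: "\<And>m. x m \<noteq> 0"
    and progs: "\<And>m. arith_prog (u m) (x m) \<subseteq> T"
    and fin: "finite {a \<in> T. \<bar>a\<bar> \<le> t}"
  shows "(\<Sum>m<M. 2 * ((t - \<bar>u m\<bar>) / \<bar>x m\<bar>) - 1) \<le> real (card {a \<in> T. \<bar>a\<bar> \<le> t} + M ^ 2)"
proof -
  define Q where "Q m = {v \<in> arith_prog (u m) (x m). \<bar>v\<bar> \<le> t}" for m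
  have fin_Q: "finite (Q m)" for m
    unfolding Q_def by (rule finite_arith_prog_bounded[OF nonzero])
  have overlap: "card (Q i \<inter> Q j) \<le> 1" if "i \<noteq> j" for i j
    unfolding One_nat_def card_le_Suc0_iff_eq[OF finite_Int[OF disjI1[OF fin_Q]]]
    using arith_prog_inter_unique[OF ratio[OF that]] by (auto simp: Q_def)
  have "(\<Sum>m<M. 2 * ((t - \<bar>u m\<bar>) / \<bar>x m\<bar>) - 1) \<le> real (\<Sum>m<M. card (Q m))"
    unfolding Q_def of_nat_sum by (intro sum_mono card_arith_prog_bounded_ge nonzero)
  also have "\<dots> \<le> real (card (\<Union>m<M. Q m) + M ^ 2)"
    unfolding of_nat_le_iff by (rule card_UN_ge_sum_card[OF fin_Q overlap])
  also have "card (\<Union>m<M. Q m) \<le> card {a \<in> T. \<bar>a\<bar> \<le> t}"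
    using progs by (intro card_mono[OF fin]) (auto simp: Q_def)
  finally show ?thesis
    by simp
qed

lemma not_linear_growth_if_arith_progs:
  fixes T :: "real set" and u x :: "nat \<Rightarrow> real"
  assumes ratio: "\<And>m m'. m \<noteq> m' \<Longrightarrow> x m / x m' \<notin> \<rat>"
    and nonzero: "\<And>m. x m \<noteq> 0"
    and diverges: "filterlim (\<lambda>M. \<Sum>m<M. 1 / \<bar>x m\<bar>) at_top sequentially"
    and progs: "\<And>m. arith_prog (u m) (x m) \<subseteq> T"
  shows "\<not> linear_growth T"
proof
  assume "linear_growth T"
  then obtain C D where "C > 0" and growth: "\<And>n::nat. finite {a \<in> T. \<bar>a\<bar> \<le> real n} \<and>
      real (card {a \<in> T. \<bar>a\<bar> \<le> real n}) \<le> C * real n + D"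
    unfolding linear_growth_def by blast
  obtain M where M: "C \<le> (\<Sum>m<M. 1 / \<bar>x m\<bar>)"
    using diverges unfolding filterlim_at_top eventually_sequentially by blast
  define S where "S = (\<Sum>m<M. 1 / \<bar>x m\<bar>)"
  define K where "K = (\<Sum>m<M. 2 * \<bar>u m\<bar> / \<bar>x m\<bar> + 1)"
  have bound: "real n * (2 * S) - K \<le> C * real n + D + real M ^ 2" for n :: nat
  proof -
    have "(\<Sum>m<M. 2 * ((real n - \<bar>u m\<bar>) / \<bar>x m\<bar>) - 1) = real n * (2 * S) - K"
      unfolding S_def K_def sum_distrib_left sum_subtractf[symmetric]
      by (intro sum.cong) (simp_all add: diff_divide_distrib)
    moreover have "(\<Sum>m<M. 2 * ((real n - \<bar>u m\<bar>) / \<bar>x m\<bar>) - 1)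
        \<le> real (card {a \<in> T. \<bar>a\<bar> \<le> real n} + M ^ 2)"
      by (rule sum_card_arith_progs_le) (use ratio nonzero progs growth in auto)
    ultimately show ?thesis
      using growth[of n] by simp
  qed
  obtain n :: nat where n: "D + real M ^ 2 + K < real n * C"
    using reals_Archimedean3[OF \<open>C > 0\<close>] by blast
  have "2 * (real n * C) \<le> real n * (2 * S)"
    using M unfolding S_def[symmetric] by (simp add: mult_left_mono)
  with bound[of n] n show False
    by (simp add: algebra_simps)
qed

lemma sum_inverse_at_top_if_linear_bound:
  fixes x :: "nat \<Rightarrow> real"
  assumes nonzero: "\<And>m. x m \<noteq> 0" and "c > 0"
    and bound: "\<And>m. \<bar>x m\<bar> \<le> c * real (Suc m)"
  shows "filterlim (\<lambda>M. \<Sum>m<M. 1 / \<bar>x m\<bar>) at_top sequentially"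
proof (rule filterlim_at_top_mono)
  show "filterlim (\<lambda>M. 1 / c * harm M) at_top sequentially"
    using \<open>c > 0\<close> by (intro filterlim_tendsto_pos_mult_at_top[OF tendsto_const _ harm_at_top]) simp
  have "1 / c * harm M \<le> (\<Sum>m<M. 1 / \<bar>x m\<bar>)" for M
    unfolding harm_altdef sum_distrib_left
  proof (rule sum_mono)
    fix m
    have "c * real (Suc m) > 0" and "\<bar>x m\<bar> > 0"
      using \<open>c > 0\<close> nonzero by auto
    with bound[of m] show "1 / c * inverse (real (Suc m)) \<le> 1 / \<bar>x m\<bar>"
      by (simp add: field_simps)
  qed
  then show "\<forall>\<^sub>F M in sequentially. 1 / c * harm M \<le> (\<Sum>m<M. 1 / \<bar>x m\<bar>)"
    by simp
qed

lemma irrational_shift_ratio: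
  fixes r :: real and m m' :: nat
  assumes "r \<notin> \<rat>" and "m \<noteq> m'"
  shows "(r + real m) / (r + real m') \<notin> \<rat>"
proof
  assume "(r + real m) / (r + real m') \<in> \<rat>"
  then obtain q where q: "(r + real m) / (r + real m') = of_rat q"
    by (auto elim: Rats_cases)
  have "r + real m' \<noteq> 0"
    using assms(1) by (metis Rats_of_nat Rats_minus_iff add_eq_0_iff)
  with q have "r * (1 - of_rat q) = of_rat q * real m' - real m"
    by (simp add: field_simps)
  moreover have "of_rat q \<noteq> (1::real)"
    using q \<open>r + real m' \<noteq> 0\<close> assms(2) by auto
  ultimately have "r = (of_rat q * real m' - real m) / (1 - of_rat q)"
    by (simp add: field_simps)
  with assms(1) show False
    by simp
qed

lemma rational_if_arith_progs_in_linear_growth: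
  fixes T :: "real set" and u :: "nat \<Rightarrow> real" and y r :: real
  assumes "linear_growth T" and "y \<noteq> 0"
    and progs: "\<And>(m::nat) (k::int). u m + of_int k * (y * (r + real m)) \<in> T"
  shows "r \<in> \<rat>"
proof (rule ccontr)
  assume r: "r \<notin> \<rat>"
  define x where "x m = y * (r + real m)" for m
  have nonzero: "x m \<noteq> 0" for m
    using r \<open>y \<noteq> 0\<close> unfolding x_def by (metis Rats_of_nat Rats_minus_iff add_eq_0_iff mult_eq_0_iff)
  have "\<not> linear_growth T"
  proof (rule not_linear_growth_if_arith_progs)
    show "x m / x m' \<notin> \<rat>" if "m \<noteq> m'" for m m'
      using irrational_shift_ratio[OF r that] \<open>y \<noteq> 0\<close> by (simp add: x_def)
    show "x m \<noteq> 0" for m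
      by (fact nonzero)
    have "\<bar>x m\<bar> \<le> \<bar>y\<bar> * (\<bar>r\<bar> + 1) * real (Suc m)" for m
    proof -
      have "\<bar>r\<bar> + real m \<le> (\<bar>r\<bar> + 1) * real (Suc m)"
        by (simp add: algebra_simps add_increasing)
      then have "\<bar>r + real m\<bar> \<le> (\<bar>r\<bar> + 1) * real (Suc m)"
        using abs_triangle_ineq[of r "real m"] by linarith
      then show ?thesis
        unfolding x_def abs_mult mult.assoc by (simp add: mult_left_mono)
    qed
    then show "filterlim (\<lambda>M. \<Sum>m<M. 1 / \<bar>x m\<bar>) at_top sequentially"
      using \<open>y \<noteq> 0\<close> by (intro sum_inverse_at_top_if_linear_bound nonzero) auto
    show "arith_prog (u m) (x m) \<subseteq> T" for m
      using progs unfolding arith_prog_def x_def by auto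
  qed
  with \<open>linear_growth T\<close> show False
    by contradiction
qed

lemma rational_if_bilinear_family_in_linear_growth:
  fixes T :: "real set" and p b c e h :: real
  assumes growth: "linear_growth T" and "h \<noteq> 0" and "e \<noteq> 0"
    and family: "\<And>k m :: int. p + c * of_int k + b * (of_int m * h) + e * of_int k * (of_int m * h) \<in> T"
  shows "b / e \<in> \<rat>" and "c / (h * e) \<in> \<rat>"
proof -
  show "b / e \<in> \<rat>"
  proof (rule rational_if_arith_progs_in_linear_growth[OF growth])
    show "h * e \<noteq> 0"
      using assms by simp
    fix k :: nat and m :: int
    have eq: "(p + c * real k) + of_int m * (h * e * (b / e + real k))
        = p + c * of_int (int k) + b * (of_int m * h) + e * of_int (int k) * (of_int m * h)"
      using \<open>e \<noteq> 0\<close> by (simp add: field_simps)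
    show "(p + c * real k) + of_int m * (h * e * (b / e + real k)) \<in> T"
      unfolding eq by (rule family)
  qed
  show "c / (h * e) \<in> \<rat>"
  proof (rule rational_if_arith_progs_in_linear_growth[OF growth])
    show "h * e \<noteq> 0"
      using assms by simp
    fix m :: nat and k :: int
    have eq: "(p + b * (real m * h)) + of_int k * (h * e * (c / (h * e) + real m))
        = p + c * of_int k + b * (of_int (int m) * h) + e * of_int k * (of_int (int m) * h)"
      using \<open>h \<noteq> 0\<close> \<open>e \<noteq> 0\<close> by (simp add: field_simps)
    show "(p + b * (real m * h)) + of_int k * (h * e * (c / (h * e) + real m)) \<in> T"
      unfolding eq by (rule family)
  qed
qed

lemma trace_mult_upper_lower:
  "trace (A ** upper_unipotent x ** lower_unipotent y) =
     A$1$1 + A$2$2 + A$2$1 * x + A$1$2 * y + A$1$1 * x * y"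
  by (simp add: trace_def sum_2 matrix_matrix_mult_def upper_unipotent_def lower_unipotent_def algebra_simps)

lemma trace_mult_lower_upper:
  "trace (A ** lower_unipotent y ** upper_unipotent x) =
     A$1$1 + A$2$2 + A$2$1 * x + A$1$2 * y + A$2$2 * x * y"
  by (simp add: trace_def sum_2 matrix_matrix_mult_def upper_unipotent_def lower_unipotent_def algebra_simps)

lemma entry_ratios_rational:
  fixes G :: "mat2 set" and h :: real
  assumes G: "psl_subgroup G" and growth: "linear_growth (traces G)" and "h \<noteq> 0"
    and upper: "\<And>k::int. upper_unipotent (of_int k) \<in> G"
    and lower: "\<And>k::int. lower_unipotent (of_int k * h) \<in> G"
    and "A \<in> G"
  shows "A$1$1 \<noteq> 0 \<Longrightarrow> A$1$2 / A$1$1 \<in> \<rat> \<and> A$2$1 / (h * A$1$1) \<in> \<rat>"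
    and "A$2$2 \<noteq> 0 \<Longrightarrow> A$1$2 / A$2$2 \<in> \<rat> \<and> A$2$1 / (h * A$2$2) \<in> \<rat>"
proof -
  have closed: "B \<in> G \<Longrightarrow> C \<in> G \<Longrightarrow> B ** C \<in> G" for B C
    using G unfolding psl_subgroup_def by blast
  have "trace (A ** upper_unipotent (of_int k) ** lower_unipotent (of_int m * h)) \<in> traces G"
    and "trace (A ** lower_unipotent (of_int m * h) ** upper_unipotent (of_int k)) \<in> traces G"
    for k m :: int
    unfolding traces_def using closed \<open>A \<in> G\<close> upper lower by blast+
  then have upper_lower: "A$1$1 + A$2$2 + A$2$1 * of_int k + A$1$2 * (of_int m * h)
        + A$1$1 * of_int k * (of_int m * h) \<in> traces G"
    and lower_upper: "A$1$1 + A$2$2 + A$2$1 * of_int k + A$1$2 * (of_int m * h)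
        + A$2$2 * of_int k * (of_int m * h) \<in> traces G" for k m :: int
    unfolding trace_mult_upper_lower trace_mult_lower_upper by (simp_all add: mult.assoc)
  show "A$1$1 \<noteq> 0 \<Longrightarrow> A$1$2 / A$1$1 \<in> \<rat> \<and> A$2$1 / (h * A$1$1) \<in> \<rat>"
    using rational_if_bilinear_family_in_linear_growth[OF growth \<open>h \<noteq> 0\<close> _ upper_lower] by simp
  show "A$2$2 \<noteq> 0 \<Longrightarrow> A$1$2 / A$2$2 \<in> \<rat> \<and> A$2$1 / (h * A$2$2) \<in> \<rat>"
    using rational_if_bilinear_family_in_linear_growth[OF growth \<open>h \<noteq> 0\<close> _ lower_upper] by simp
qed

lemma unipotent_parameter_rational:
  fixes G :: "mat2 set" and h :: real
  assumes G: "psl_subgroup G" and growth: "linear_growth (traces G)" and "h \<noteq> 0"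
    and upper: "\<And>k::int. upper_unipotent (of_int k) \<in> G"
    and lower: "\<And>k::int. lower_unipotent (of_int k * h) \<in> G"
  shows "h \<in> \<rat>"
proof (cases "h = -1")
  case True
  then show ?thesis
    by simp
next
  case False
  define A where "A = upper_unipotent 1 ** lower_unipotent h"
  have "A \<in> G"
    using G upper[of 1] lower[of 1] unfolding A_def psl_subgroup_def by simp
  moreover have "A$1$1 = 1 + h" and "A$1$2 = 1"
    unfolding A_def by (simp_all add: matrix_matrix_mult_def sum_2 upper_unipotent_def lower_unipotent_def)
  moreover have "1 + h \<noteq> 0"
    using False by simp
  ultimately have "1 / (1 + h) \<in> \<rat>"
    using entry_ratios_rational(1)[OF G growth \<open>h \<noteq> 0\<close> upper lower \<open>A \<in> G\<close>] by simp
  then have "1 + h \<in> \<rat>"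
    by (metis Rats_divide Rats_1 div_by_1 divide_divide_eq_right mult_1)
  then show ?thesis
    by (metis Rats_1 Rats_diff add_diff_cancel_left')
qed

lemma rational_matrix_mult:
  assumes "rational_matrix A" and "rational_matrix B"
  shows "rational_matrix (A ** B)"
  using assms unfolding rational_matrix_def matrix_matrix_mult_def by auto

lemma rational_square_if_entry_ratios_rational:
  fixes A :: mat2 and e :: real
  assumes det: "det A = 1" and "e \<noteq> 0" and ratios: "\<And>i j. A$i$j / e \<in> \<rat>"
  shows "rational_matrix (A ** A)"
proof -
  have "(A$1$1 / e) * (A$2$2 / e) - (A$1$2 / e) * (A$2$1 / e) = 1 / (e * e)"
    using det \<open>e \<noteq> 0\<close> unfolding det_2 by (simp add: field_simps)
  then have "1 / (e * e) \<in> \<rat>"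
    using ratios by (metis Rats_diff Rats_mult)
  then have square: "e * e \<in> \<rat>"
    by (metis Rats_1 Rats_divide divide_divide_eq_right div_by_1 mult_1)
  have "A$i$k * A$k'$j \<in> \<rat>" for i k k' j
  proof -
    have "A$i$k * A$k'$j = (e * e) * ((A$i$k / e) * (A$k'$j / e))"
      using \<open>e \<noteq> 0\<close> by simp
    also have "\<dots> \<in> \<rat>"
      using square ratios by (blast intro: Rats_mult)
    finally show ?thesis .
  qed
  then show ?thesis
    unfolding rational_matrix_def matrix_matrix_mult_def by auto
qed

lemma rational_square_if_diagonal_ratios_rational:
  fixes A :: mat2 and h :: real
  assumes det: "det A = 1" and "h \<in> \<rat>" and "h \<noteq> 0" and "A$1$2 \<noteq> 0"
    and ratios_11: "A$1$1 \<noteq> 0 \<Longrightarrow> A$1$2 / A$1$1 \<in> \<rat> \<and> A$2$1 / (h * A$1$1) \<in> \<rat>"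
    and ratios_22: "A$2$2 \<noteq> 0 \<Longrightarrow> A$1$2 / A$2$2 \<in> \<rat> \<and> A$2$1 / (h * A$2$2) \<in> \<rat>"
  shows "rational_matrix (A ** A)"
proof -
  have h_times: "x / (h * y) \<in> \<rat> \<Longrightarrow> x / y \<in> \<rat>" for x y
    using \<open>h \<in> \<rat>\<close> \<open>h \<noteq> 0\<close> by (metis Rats_mult divide_divide_eq_left' nonzero_mult_div_cancel_left times_divide_eq_right)
  consider "A$1$1 = 0" "A$2$2 = 0" | "A$1$1 \<noteq> 0" | "A$1$1 = 0" "A$2$2 \<noteq> 0"
    by blast
  then show ?thesis
  proof cases
    case 1
    with det have "A$1$2 * A$2$1 = -1"
      unfolding det_2 by simp
    with 1 show ?thesis
      unfolding rational_matrix_def matrix_matrix_mult_def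
      by (simp add: sum_2 forall_2 mult.commute)
  next
    case 2
    have "A$2$2 / A$1$1 \<in> \<rat>"
    proof (cases "A$2$2 = 0")
      case False
      then have "A$2$2 / A$1$1 = (A$1$2 / A$1$1) / (A$1$2 / A$2$2)"
        using \<open>A$1$2 \<noteq> 0\<close> by simp
      also have "\<dots> \<in> \<rat>"
        using ratios_11[OF 2] ratios_22[OF False] by (metis Rats_divide)
      finally show ?thesis .
    qed simp
    with 2 ratios_11 h_times have "\<forall>i j. A$i$j / A$1$1 \<in> \<rat>"
      by (auto simp: forall_2)
    with det 2 show ?thesis
      by (blast intro: rational_square_if_entry_ratios_rational)
  next
    case 3
    with ratios_22 h_times have "\<forall>i j. A$i$j / A$2$2 \<in> \<rat>"
      by (auto simp: forall_2)
    with det 3 show ?thesis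
      by (blast intro: rational_square_if_entry_ratios_rational)
  qed
qed

lemma upper_unipotent_mem_if_stab_infty:
  assumes "stab_infty G = {s *\<^sub>R upper_unipotent (of_int k) | s k. s \<in> {1, -1} \<and> k \<in> (UNIV :: int set)}"
  shows "upper_unipotent (of_int k) \<in> G"
proof -
  have "1 *\<^sub>R upper_unipotent (of_int k) \<in> stab_infty G"
    unfolding assms by blast
  then show ?thesis
    by (simp add: stab_infty_def)
qed

lemma lower_unipotent_mem_if_stab_zero:
  assumes "stab_zero G = {s *\<^sub>R lower_unipotent (of_int k * h) | s k. s \<in> {1, -1} \<and> k \<in> (UNIV :: int set)}"
  shows "lower_unipotent (of_int k * h) \<in> G"
proof -
  have "1 *\<^sub>R lower_unipotent (of_int k * h) \<in> stab_zero G"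
    unfolding assms by blast
  then show ?thesis
    by (simp add: stab_zero_def)
qed

lemma rational_matrix_if_mem_stab_zero:
  assumes "stab_zero G = {s *\<^sub>R lower_unipotent (of_int k * h) | s k. s \<in> {1, -1} \<and> k \<in> (UNIV :: int set)}"
    and "h \<in> \<rat>" and "A \<in> G" and "A$1$2 = 0"
  shows "rational_matrix A"
proof -
  have "A \<in> stab_zero G"
    using \<open>A \<in> G\<close> \<open>A$1$2 = 0\<close> by (simp add: stab_zero_def)
  then obtain s k where "s \<in> {1, -1}" and "A = s *\<^sub>R lower_unipotent (of_int k * h)"
    using assms(1) by auto
  with \<open>h \<in> \<rat>\<close> show ?thesis
    by (auto simp: rational_matrix_def forall_2 lower_unipotent_def vector_2)
qed

theorem lemma3p1:
  fixes \<beta> :: real and G :: "mat2 set"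
  assumes "\<beta> \<noteq> 0"
    and "psl_lattice G"
    and "stab_infty G = {s *\<^sub>R upper_unipotent (of_int k) | s k. s \<in> {1, -1} \<and> k \<in> (UNIV :: int set)}"
    and "stab_zero G = {s *\<^sub>R lower_unipotent (of_int k * \<beta>^2) | s k. s \<in> {1, -1} \<and> k \<in> (UNIV :: int set)}"
    and "linear_growth (traces G)"
  shows "\<forall>A\<in>G. \<exists>s\<in>{1, -1::real}. rational_matrix (s *\<^sub>R (A ** A))"
proof
  fix A assume "A \<in> G"
  have G: "psl_subgroup G"
    using assms(2) by (simp add: psl_lattice_def discrete_subgroup_def)
  have "\<beta>^2 \<noteq> 0"
    using assms(1) by simp
  note upper = upper_unipotent_mem_if_stab_infty[OF assms(3)]
  note lower = lower_unipotent_mem_if_stab_zero[OF assms(4)]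
  have "\<beta>^2 \<in> \<rat>"
    using unipotent_parameter_rational[OF G assms(5) \<open>\<beta>^2 \<noteq> 0\<close> upper lower] .
  have "rational_matrix (A ** A)"
  proof (cases "A$1$2 = 0")
    case True
    with assms(4) \<open>\<beta>^2 \<in> \<rat>\<close> \<open>A \<in> G\<close> have "rational_matrix A"
      by (rule rational_matrix_if_mem_stab_zero)
    then show ?thesis
      by (intro rational_matrix_mult)
  next
    case False
    have "det A = 1"
      using G \<open>A \<in> G\<close> unfolding psl_subgroup_def SL2_def by auto
    then show ?thesis
      using rational_square_if_diagonal_ratios_rational[OF _ \<open>\<beta>^2 \<in> \<rat>\<close> \<open>\<beta>^2 \<noteq> 0\<close> False]
        entry_ratios_rational[OF G assms(5) \<open>\<beta>^2 \<noteq> 0\<close> upper lower \<open>A \<in> G\<close>] by blast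
  qed
  then show "\<exists>s\<in>{1, -1::real}. rational_matrix (s *\<^sub>R (A ** A))"
    by auto
qed

end
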